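(* The class of betweenness frames is not sufficiency axiomatic; that is, there is no set $\Gamma$ of formulas in the language with a binary sufficiency operator $[\![\cdot,\cdot]\!]$ such that a 3-frame belongs to the class of betweenness frames if and only if every formula of $\Gamma$ is valid on it.
   Context: A 3-frame is a pair $\langle U,B\rangle$ with $U$ a non-empty set and $B\subseteq U^3$. It is a betweenness frame if for all $a,b,c\in U$: (BT0) $B(a,a,a)$; (BT1) $B(a,b,c)\Rightarrow B(c,b,a)$; (BT2) $B(a,b,c)\Rightarrow B(a,a,b)$; (BT3) $B(a,b,c)\wedge B(a,c,b)\Rightarrow b=c$. Formulas of the sufficiency language are built from propositional variables with Boolean connectives and a binary operator $[\![\varphi,\psi]\!]$. In a model on a 3-frame $\langle U,B\rangle$ (a valuation of variables as subsets of $U$, Boolean connectives interpreted classically), $x\Vdash[\![\varphi,\psi]\!]$ iff for all $y,z\in U$, if $y\Vdash\varphi$ and $z\Vdash\psi$ then $B(y,x,z)$. A formula is valid on a frame if it holds at every point under every valuation. A class of 3-frames is sufficiency axiomatic if it is the class of all 3-frames on which all formulas of some set $\Gamma$ are valid. *)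

theory Defs
  imports Main
begin

datatype fm =
    Var nat
  | Bot
  | Neg fm
  | Conj fm fm
  | Disj fm fm
  | Impl fm fm
  | Suff fm fm

definition three_frame :: "'a set \<Rightarrow> ('a \<times> 'a \<times> 'a) set \<Rightarrow> bool" where
  "three_frame U B \<longleftrightarrow> U \<noteq> {} \<and> B \<subseteq> U \<times> U \<times> U"

definition betweenness_frame :: "'a set \<Rightarrow> ('a \<times> 'a \<times> 'a) set \<Rightarrow> bool" where
  "betweenness_frame U B \<longleftrightarrow> three_frame U B \<and>
     (\<forall>a\<in>U. \<forall>b\<in>U. \<forall>c\<in>U.
        (a, a, a) \<in> B \<and>
        ((a, b, c) \<in> B \<longrightarrow> (c, b, a) \<in> B) \<and>
        ((a, b, c) \<in> B \<longrightarrow> (a, a, b) \<in> B) \<and>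
        ((a, b, c) \<in> B \<and> (a, c, b) \<in> B \<longrightarrow> b = c))"

fun sat :: "'a set \<Rightarrow> ('a \<times> 'a \<times> 'a) set \<Rightarrow> (nat \<Rightarrow> 'a set) \<Rightarrow> 'a \<Rightarrow> fm \<Rightarrow> bool" where
  "sat U B v x (Var p) = (x \<in> v p)"
| "sat U B v x Bot = False"
| "sat U B v x (Neg f) = (\<not> sat U B v x f)"
| "sat U B v x (Conj f g) = (sat U B v x f \<and> sat U B v x g)"
| "sat U B v x (Disj f g) = (sat U B v x f \<or> sat U B v x g)"
| "sat U B v x (Impl f g) = (sat U B v x f \<longrightarrow> sat U B v x g)"
| "sat U B v x (Suff f g) =
     (\<forall>y\<in>U. \<forall>z\<in>U. sat U B v y f \<and> sat U B v z g \<longrightarrow> (y, x, z) \<in> B)"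

definition valid :: "'a set \<Rightarrow> ('a \<times> 'a \<times> 'a) set \<Rightarrow> fm \<Rightarrow> bool" where
  "valid U B f \<longleftrightarrow> (\<forall>v. (\<forall>p. v p \<subseteq> U) \<longrightarrow> (\<forall>x\<in>U. sat U B v x f))"

end

theory Submission
  imports Defs
begin

text \<open>Suppose no point of a frame lies between every pair of points. Under a valuation
  that makes every variable empty or all of \<open>U\<close>, every formula is then again empty or all
  of \<open>U\<close>, and \<open>[\<phi>,\<psi>]\<close> holds iff \<open>\<phi>\<close> or \<open>\<psi>\<close> is empty, exactly as on the one-point
  frame with empty relation. So a formula valid on such a frame is valid on the one-point
  empty frame. The two-point diagonal frame is a betweenness frame of this kind, whereas the
  one-point empty frame violates (BT0); hence every \<open>\<Gamma>\<close> either rejects the former or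
  accepts the latter.\<close>

lemma sat_constant_valuation:
  assumes no_total_point: "\<forall>x\<in>U. \<exists>y\<in>U. \<exists>z\<in>U. (y, x, z) \<notin> B"
    and "x \<in> U"
  shows "sat U B (\<lambda>p. if a \<in> v p then U else {}) x f = sat {a} {} v a f"
  using \<open>x \<in> U\<close>
proof (induction f arbitrary: x)
  case (Suff f g)
  obtain y z where "y \<in> U" "z \<in> U" "(y, x, z) \<notin> B"
    using no_total_point Suff.prems by blast
  then show ?case using Suff by auto
qed auto

lemma valid_one_point_empty_frame:
  fixes a :: 'a and U :: "'a set"
  assumes "valid U B f" "U \<noteq> {}"
    and "\<forall>x\<in>U. \<exists>y\<in>U. \<exists>z\<in>U. (y, x, z) \<notin> B"
  shows "valid {a} {} f"
  unfolding valid_def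
proof (intro allI impI ballI)
  fix v :: "nat \<Rightarrow> 'a set" and x
  assume "x \<in> {a}"
  obtain u where "u \<in> U" using \<open>U \<noteq> {}\<close> by blast
  then have "sat U B (\<lambda>p. if a \<in> v p then U else {}) u f"
    using \<open>valid U B f\<close> unfolding valid_def by simp
  then show "sat {a} {} v x f"
    using sat_constant_valuation[OF assms(3) \<open>u \<in> U\<close>, of a v f] \<open>x \<in> {a}\<close> by simp
qed

lemma betweenness_frame_diagonal:
  "U \<noteq> {} \<Longrightarrow> betweenness_frame U {(x, x, x) | x. x \<in> U}"
  by (auto simp: betweenness_frame_def three_frame_def)

lemma diagonal_no_total_point:
  assumes "a \<in> U" "b \<in> U" "a \<noteq> b"
  shows "\<forall>x\<in>U. \<exists>y\<in>U. \<exists>z\<in>U. (y, x, z) \<notin> {(x, x, x) | x. x \<in> U}"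
  using assms by blast

lemma valid_one_point_empty_frame_if_valid_diagonal:
  fixes c :: 'a and U :: "'a set"
  assumes "valid U {(x, x, x) | x. x \<in> U} f" "a \<in> U" "b \<in> U" "a \<noteq> b"
  shows "valid {c} {} f"
  using assms(1) _ diagonal_no_total_point[OF assms(2-4)]
  by (rule valid_one_point_empty_frame) (use assms(2) in blast)

lemma three_frame_one_point_empty: "three_frame {a} {}"
  by (simp add: three_frame_def)

lemma not_betweenness_frame_one_point_empty: "\<not> betweenness_frame {a} {}"
  by (simp add: betweenness_frame_def)

theorem theorem19:
  fixes \<Gamma> :: "fm set"
  shows "\<exists>(U :: nat set) B. three_frame U B \<and>
           \<not> (betweenness_frame U B \<longleftrightarrow> (\<forall>f\<in>\<Gamma>. valid U B f))"
proof (cases "\<forall>f\<in>\<Gamma>. valid {0::nat} {} f")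
  case True
  then show ?thesis
    using three_frame_one_point_empty[of 0] not_betweenness_frame_one_point_empty[of 0]
    by (intro exI[of _ "{0}"] exI[of _ "{}"]) simp
next
  case False
  define U :: "nat set" where "U = {0, 1}"
  define D :: "(nat \<times> nat \<times> nat) set" where "D = {(x, x, x) | x. x \<in> U}"
  have "betweenness_frame U D"
    unfolding D_def by (rule betweenness_frame_diagonal) (simp add: U_def)
  moreover have "\<not> (\<forall>f\<in>\<Gamma>. valid U D f)"
  proof
    assume "\<forall>f\<in>\<Gamma>. valid U D f"
    then have "\<forall>f\<in>\<Gamma>. valid {0::nat} {} f"
      using valid_one_point_empty_frame_if_valid_diagonal[of U _ 0 1]
      unfolding D_def U_def by simp
    with False show False by contradiction
  qed
  ultimately show ?thesis
    by (intro exI[of _ U] exI[of _ D]) (simp add: betweenness_frame_def)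
qed

end
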